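(* The time-discrete first order scheme consisting of $$\widehat\rho=\rho^n-\Delta t\nabla\cdot(\rho\mathbf u)^n,\ \widehat{\rho\mathbf u}=(\rho\mathbf u)^n-\Delta t\nabla\cdot(\rho\mathbf u\otimes\mathbf u+p\,\mathrm{Id})^n,\ \widehat{\rho E}=(\rho E)^n-\Delta t\nabla\cdot((\rho E+\Pi)^n\mathbf u^n),$$ $$\rho^{n+1}=\widehat\rho,\qquad (\rho\mathbf u)^{n+1}=\widehat{\rho\mathbf u}-\frac{1-\varepsilon^2}{\varepsilon^2}\Delta t\nabla p^{n+1},$$ and the elliptic pressure equation $$-\frac{(1-\varepsilon^2)^2}{\varepsilon^2}\Delta t^2\nabla\cdot\Big(\frac{(p-p_\infty)^{n+1}}{\widehat\rho}\nabla p^{n+1}\Big)+\frac{p^{n+1}}{\gamma-1}=-\frac{(1-\varepsilon^2)^2}{2\varepsilon^2}\frac{\Delta t^2}{\widehat\rho}\|\nabla p^{n+1}\|^2-(1-\varepsilon^2)\Delta t(p-p_\infty)^{n+1}\nabla\cdot\widehat{\mathbf u}+\frac{\widehat p}{\gamma-1}$$ (with $\widehat{\mathbf u}=\widehat{\rho\mathbf u}/\widehat\rho$, $\widehat p=(\gamma-1)(\widehat{\rho E}-\frac{\varepsilon^2}{2}\widehat\rho\|\widehat{\mathbf u}\|^2)$) is asymptotic preserving in the following sense: the leading order asymptotic expansion of the numerical solution is a consistent approximation of the incompressible Euler equations $$\rho^{(0)}_t+\nabla\cdot(\rho^{(0)}\mathbf u^{(0)})=0,\quad (\rho^{(0)}\mathbf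 u^{(0)})_t+\nabla\cdot(\rho^{(0)}\mathbf u^{(0)}\otimes\mathbf u^{(0)})+\nabla p^{(2)}=0,\quad \nabla\cdot\mathbf u^{(0)}=-\frac{1}{\gamma p^{(0)}}\frac{dp^{(0)}}{dt}.$$
   Context: Nondimensionalised Euler equations in $\mathbb R^d$ with conserved variables $(\rho,\rho\mathbf u,\rho E)$, equation of state $p=(\gamma-1)(\rho E-\frac{\varepsilon^2}{2}\rho\|\mathbf u\|^2)$, $\gamma>1$, reference Mach number $0<\varepsilon\le1$. Auxiliary pressure $\Pi=\varepsilon^2p+(1-\varepsilon^2)p_\infty$ with reference pressure $p_\infty(t)=\inf_{\mathbf x}p(\mathbf x,t)$. The asymptotic analysis expands all variables as $f=f^{(0)}+\varepsilon f^{(1)}+\varepsilon^2f^{(2)}+\mathcal O(\varepsilon^3)$; in the limit system $p^{(0)}=p^{(0)}(t)$ is spatially constant and $p^{(2)}$ is the incompressible pressure. *)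

theory Defs
  imports "HOL-Analysis.Analysis"
begin

definition pd :: "'d \<Rightarrow> (real^'d \<Rightarrow> real) \<Rightarrow> real^'d \<Rightarrow> real" where
  "pd i f x = deriv (\<lambda>t. f (x + t *\<^sub>R axis i 1)) 0"

definition grad :: "(real^'d \<Rightarrow> real) \<Rightarrow> real^'d \<Rightarrow> real^'d" where
  "grad f x = (\<chi> i. pd i f x)"

definition divg :: "(real^'d \<Rightarrow> real^'d) \<Rightarrow> real^'d \<Rightarrow> real" where
  "divg F x = (\<Sum>i\<in>UNIV. pd i (\<lambda>y. F y $ i) x)"

definition div_ruu :: "(real^'d \<Rightarrow> real) \<Rightarrow> (real^'d \<Rightarrow> real^'d) \<Rightarrow> real^'d \<Rightarrow> real^'d" where
  "div_ruu r u x = (\<chi> j. \<Sum>i\<in>UNIV. pd i (\<lambda>y. r y * (u y $ i) * (u y $ j)) x)"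

definition twice_pdiff :: "(real^'d \<Rightarrow> real) \<Rightarrow> bool" where
  "twice_pdiff f \<longleftrightarrow> (\<forall>x. f differentiable (at x)) \<and>
                      (\<forall>i x. pd i f differentiable (at x))"

definition bdd_C2 :: "(real^'d \<Rightarrow> real) \<Rightarrow> bool" where
  "bdd_C2 f \<longleftrightarrow> twice_pdiff f \<and> bounded (range f) \<and> (\<forall>i. bounded (range (pd i f))) \<and>
                 (\<forall>i j. bounded (range (pd j (pd i f))))"

definition asym_exp :: "(real \<Rightarrow> real^'d \<Rightarrow> real) \<Rightarrow> (real^'d \<Rightarrow> real) \<Rightarrow>
                        (real^'d \<Rightarrow> real) \<Rightarrow> (real^'d \<Rightarrow> real) \<Rightarrow> bool" where
  "asym_exp f f0 f1 f2 \<longleftrightarrow> bdd_C2 f0 \<and> bdd_C2 f1 \<and> bdd_C2 f2 \<and>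
     (\<exists>\<delta>>0. \<exists>C. \<forall>e. 0 < e \<and> e < \<delta> \<longrightarrow> twice_pdiff (f e) \<and>
        (\<forall>x. \<bar>f e x - (f0 x + e * f1 x + e\<^sup>2 * f2 x)\<bar> \<le> C * e ^ 3 \<and>
             (\<forall>i. \<bar>pd i (f e) x - (pd i f0 x + e * pd i f1 x + e\<^sup>2 * pd i f2 x)\<bar> \<le> C * e ^ 3) \<and>
             (\<forall>i j. \<bar>pd j (pd i (f e)) x - (pd j (pd i f0) x + e * pd j (pd i f1) x
                                     + e\<^sup>2 * pd j (pd i f2) x)\<bar> \<le> C * e ^ 3)))"

definition vasym_exp :: "(real \<Rightarrow> real^'d \<Rightarrow> real^'d) \<Rightarrow> (real^'d \<Rightarrow> real^'d) \<Rightarrow>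
                        (real^'d \<Rightarrow> real^'d) \<Rightarrow> (real^'d \<Rightarrow> real^'d) \<Rightarrow> bool" where
  "vasym_exp u u0 u1 u2 \<longleftrightarrow> (\<forall>i. asym_exp (\<lambda>e x. u e x $ i) (\<lambda>x. u0 x $ i) (\<lambda>x. u1 x $ i) (\<lambda>x. u2 x $ i))"

definition rhoE :: "real \<Rightarrow> real \<Rightarrow> (real^'d \<Rightarrow> real) \<Rightarrow> (real^'d \<Rightarrow> real^'d) \<Rightarrow>
                   (real^'d \<Rightarrow> real) \<Rightarrow> real^'d \<Rightarrow> real" where
  "rhoE eps \<gamma> r u p x = p x / (\<gamma> - 1) + eps\<^sup>2 / 2 * r x * (norm (u x))\<^sup>2"

definition pinf :: "(real^'d \<Rightarrow> real) \<Rightarrow> real" where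
  "pinf p = Inf (range p)"

definition rho_hat :: "real \<Rightarrow> (real^'d \<Rightarrow> real) \<Rightarrow> (real^'d \<Rightarrow> real^'d) \<Rightarrow> real^'d \<Rightarrow> real" where
  "rho_hat dt r u x = r x - dt * divg (\<lambda>y. r y *\<^sub>R u y) x"

definition m_hat :: "real \<Rightarrow> (real^'d \<Rightarrow> real) \<Rightarrow> (real^'d \<Rightarrow> real^'d) \<Rightarrow>
                    (real^'d \<Rightarrow> real) \<Rightarrow> real^'d \<Rightarrow> real^'d" where
  "m_hat dt r u p x = r x *\<^sub>R u x - dt *\<^sub>R (div_ruu r u x + grad p x)"

definition E_hat :: "real \<Rightarrow> real \<Rightarrow> real \<Rightarrow> (real^'d \<Rightarrow> real) \<Rightarrow> (real^'d \<Rightarrow> real^'d) \<Rightarrow>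
                    (real^'d \<Rightarrow> real) \<Rightarrow> real^'d \<Rightarrow> real" where
  "E_hat dt eps \<gamma> r u p x = rhoE eps \<gamma> r u p x
     - dt * divg (\<lambda>y. (rhoE eps \<gamma> r u p y + (eps\<^sup>2 * p y + (1 - eps\<^sup>2) * pinf p)) *\<^sub>R u y) x"

definition u_hat :: "real \<Rightarrow> (real^'d \<Rightarrow> real) \<Rightarrow> (real^'d \<Rightarrow> real^'d) \<Rightarrow>
                    (real^'d \<Rightarrow> real) \<Rightarrow> real^'d \<Rightarrow> real^'d" where
  "u_hat dt r u p x = (1 / rho_hat dt r u x) *\<^sub>R m_hat dt r u p x"

definition p_hat :: "real \<Rightarrow> real \<Rightarrow> real \<Rightarrow> (real^'d \<Rightarrow> real) \<Rightarrow> (real^'d \<Rightarrow> real^'d) \<Rightarrow>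
                    (real^'d \<Rightarrow> real) \<Rightarrow> real^'d \<Rightarrow> real" where
  "p_hat dt eps \<gamma> r u p x = (\<gamma> - 1) * (E_hat dt eps \<gamma> r u p x
       - eps\<^sup>2 / 2 * rho_hat dt r u x * (norm (u_hat dt r u p x))\<^sup>2)"

definition scheme_step :: "real \<Rightarrow> real \<Rightarrow> real \<Rightarrow>
     (real^'d \<Rightarrow> real) \<Rightarrow> (real^'d \<Rightarrow> real^'d) \<Rightarrow> (real^'d \<Rightarrow> real) \<Rightarrow>
     (real^'d \<Rightarrow> real) \<Rightarrow> (real^'d \<Rightarrow> real^'d) \<Rightarrow> (real^'d \<Rightarrow> real) \<Rightarrow> bool" where
  "scheme_step dt eps \<gamma> r u p r' u' p' \<longleftrightarrow>
     (\<forall>x. r' x = rho_hat dt r u x) \<and>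
     (\<forall>x. r' x *\<^sub>R u' x = m_hat dt r u p x - ((1 - eps\<^sup>2) / eps\<^sup>2 * dt) *\<^sub>R grad p' x) \<and>
     (\<forall>x. - ((1 - eps\<^sup>2)\<^sup>2 / eps\<^sup>2) * dt\<^sup>2 *
            divg (\<lambda>y. ((p' y - pinf p') / rho_hat dt r u y) *\<^sub>R grad p' y) x
          + p' x / (\<gamma> - 1)
        = - ((1 - eps\<^sup>2)\<^sup>2 / (2 * eps\<^sup>2)) * dt\<^sup>2 / rho_hat dt r u x * (norm (grad p' x))\<^sup>2
          - (1 - eps\<^sup>2) * dt * (p' x - pinf p') * divg (u_hat dt r u p) x
          + p_hat dt eps \<gamma> r u p x / (\<gamma> - 1))"

end

theory Submission
  imports Defs
begin

text \<open>All limits are taken at a fixed point \<open>x\<close> as \<open>\<epsilon> \<rightarrow> 0\<^sup>+\<close>. The expansions are assumed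
  together with two derivatives, so limits commute with the differential operators of the scheme.
  In the momentum update the new pressure gradient carries the factor \<open>(1 - \<epsilon>\<^sup>2) / \<epsilon>\<^sup>2\<close> while
  every other term stays bounded; hence the gradients of \<open>p0'\<close> and \<open>p1'\<close> vanish, \<open>\<nabla>p' / \<epsilon>\<^sup>2\<close>
  tends to \<open>\<nabla>p2'\<close>, and the order one part is the momentum equation. In the pressure equation
  the elliptic term then tends to \<open>0\<close>, because \<open>p' - p\<^sub>\<infinity>'\<close> and its gradient vanish in the limit
  (\<open>p0'\<close> is constant), and so does \<open>\<parallel>\<nabla>p'\<parallel>\<^sup>2 / \<epsilon>\<^sup>2\<close>. What remains is \<open>p0' = lim p_hat\<close>, and
  the explicit energy update gives \<open>lim p_hat = P0 - \<Delta>t \<gamma> P0 \<nabla>\<cdot>u0\<close>: the divergence constraint.\<close>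

section \<open>Partial derivatives\<close>

lemma has_real_derivative_pd:
  fixes f :: "real^'d \<Rightarrow> real"
  assumes "f differentiable (at x)"
  shows "((\<lambda>t. f (x + t *\<^sub>R axis i 1)) has_real_derivative pd i f x) (at 0)"
proof -
  have "(\<lambda>t. x + t *\<^sub>R axis i (1::real)) differentiable (at (0::real))"
    by (intro derivative_intros)
  moreover have "f differentiable (at (x + 0 *\<^sub>R axis i 1))"
    using assms by simp
  ultimately have "(\<lambda>t. f (x + t *\<^sub>R axis i 1)) differentiable (at 0)"
    using differentiable_compose[where g="\<lambda>t. x + t *\<^sub>R axis i (1::real)" and f=f] by auto
  then show ?thesis
    unfolding pd_def using DERIV_deriv_iff_real_differentiable by blast
qed

lemma pd_eqI:
  fixes f :: "real^'d \<Rightarrow> real"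
  assumes "((\<lambda>t. f (x + t *\<^sub>R axis i 1)) has_real_derivative D) (at 0)"
  shows "pd i f x = D"
  unfolding pd_def using DERIV_imp_deriv[OF assms] .

lemma pd_const [simp]: "pd i (\<lambda>y. c) x = 0"
  by (rule pd_eqI) (rule DERIV_const)

lemma pd_add:
  fixes f g :: "real^'d \<Rightarrow> real"
  assumes "f differentiable (at x)" "g differentiable (at x)"
  shows "pd i (\<lambda>y. f y + g y) x = pd i f x + pd i g x"
  by (rule pd_eqI) (intro DERIV_add has_real_derivative_pd assms)

lemma pd_mult:
  fixes f g :: "real^'d \<Rightarrow> real"
  assumes "f differentiable (at x)" "g differentiable (at x)"
  shows "pd i (\<lambda>y. f y * g y) x = pd i f x * g x + f x * pd i g x"
  by (rule pd_eqI) (use DERIV_mult[OF has_real_derivative_pd[OF assms(1)] has_real_derivative_pd[OF assms(2)]] in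
      \<open>simp add: mult.commute\<close>)

lemma pd_cmult: "g differentiable (at x) \<Longrightarrow> pd i (\<lambda>y. c * g y) x = c * pd i g x"
  by (simp add: pd_mult)

lemma pd_divide_const: "g differentiable (at x) \<Longrightarrow> pd i (\<lambda>y. g y / c) x = pd i g x / c"
  using pd_cmult[of g x i "inverse c"] by (simp add: divide_inverse mult.commute)

lemma pd_inverse:
  fixes f :: "real^'d \<Rightarrow> real"
  assumes "f differentiable (at x)" "f x \<noteq> 0"
  shows "pd i (\<lambda>y. inverse (f y)) x = - (pd i f x * inverse (f x ^ 2))"
  by (rule pd_eqI)
     (use DERIV_inverse_fun[OF has_real_derivative_pd[OF assms(1)]] assms(2) in \<open>simp add: power2_eq_square\<close>)

lemma pd_eq_derivative:
  fixes f :: "real^'d \<Rightarrow> real"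
  assumes "(f has_derivative D) (at x)"
  shows "pd i f x = D (axis i 1)"
proof (rule pd_eqI)
  have "((\<lambda>t. x + t *\<^sub>R axis i (1::real)) has_derivative (\<lambda>t. t *\<^sub>R axis i 1)) (at 0)"
    by (auto intro!: derivative_eq_intros)
  moreover have "(f has_derivative D) (at (x + 0 *\<^sub>R axis i 1))"
    using assms by simp
  ultimately have "((\<lambda>t. f (x + t *\<^sub>R axis i 1)) has_derivative (\<lambda>t. D (t *\<^sub>R axis i 1))) (at 0)"
    using has_derivative_compose[of "\<lambda>t. x + t *\<^sub>R axis i (1::real)"] by blast
  then show "((\<lambda>t. f (x + t *\<^sub>R axis i 1)) has_real_derivative D (axis i 1)) (at 0)"
    using has_derivative_linear[OF assms]
    by (simp add: has_field_derivative_def linear_scale mult.commute[of _ "D (axis i 1)"])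
qed

lemma pd_eq_0_imp_constant:
  fixes f :: "real^'d \<Rightarrow> real"
  assumes "\<And>y. f differentiable (at y)" "\<And>i y. pd i f y = 0"
  shows "f x = f z"
proof -
  have "(f has_derivative (\<lambda>h. 0)) (at y)" for y
  proof -
    obtain D where D: "(f has_derivative D) (at y)"
      using assms(1)[of y] unfolding differentiable_def by blast
    have "D h = (\<Sum>i\<in>UNIV. h $ i * D (axis i 1))" for h
    proof -
      have "D h = D (\<Sum>i\<in>UNIV. (h $ i) *\<^sub>R axis i 1)"
        using basis_expansion[of h] by (simp add: scalar_mult_eq_scaleR)
      then show ?thesis
        using has_derivative_linear[OF D] by (simp add: linear_sum linear_scale)
    qed
    moreover have "D (axis i 1) = 0" for i
      using pd_eq_derivative[OF D, of i] assms(2) by simp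
    ultimately have "D = (\<lambda>h. 0)" by auto
    then show ?thesis using D by simp
  qed
  then obtain c where "\<forall>y\<in>UNIV. f y = c"
    using has_derivative_zero_constant[of UNIV f] by auto
  then show ?thesis by simp
qed

lemma norm_sq_vec: "(norm (v::real^'d))\<^sup>2 = (\<Sum>k\<in>UNIV. (v $ k)\<^sup>2)"
  unfolding power2_norm_eq_inner inner_vec_def by (simp add: power2_eq_square)

lemma divg_scaleR:
  assumes "\<And>i. (\<lambda>y. F y $ i) differentiable (at x)"
  shows "divg (\<lambda>y. c *\<^sub>R F y) x = c * divg F x"
  unfolding divg_def sum_distrib_left using pd_cmult[OF assms] by simp

section \<open>Expansions in the Mach number\<close>

definition has_expansion :: "(real \<Rightarrow> real) \<Rightarrow> real \<Rightarrow> real \<Rightarrow> real \<Rightarrow> bool" where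
  "has_expansion a a0 a1 a2 \<longleftrightarrow>
     (\<exists>C. \<forall>\<^sub>F e in at_right 0. \<bar>a e - (a0 + e * a1 + e\<^sup>2 * a2)\<bar> \<le> C * e ^ 3)"

lemma tendsto_by_vanishing_bound:
  fixes a b :: "'a \<Rightarrow> real"
  assumes "\<forall>\<^sub>F e in F. \<bar>a e - L\<bar> \<le> b e" "(b \<longlongrightarrow> 0) F"
  shows "(a \<longlongrightarrow> L) F"
proof (rule tendsto_sandwich[of "\<lambda>e. L - b e" _ _ "\<lambda>e. L + b e"])
  show "\<forall>\<^sub>F e in F. L - b e \<le> a e" "\<forall>\<^sub>F e in F. a e \<le> L + b e"
    using assms(1) by (auto elim: eventually_mono)
  show "((\<lambda>e. L - b e) \<longlongrightarrow> L) F" "((\<lambda>e. L + b e) \<longlongrightarrow> L) F"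
    using tendsto_diff[OF tendsto_const assms(2)] tendsto_add[OF tendsto_const assms(2)] by simp_all
qed

lemma has_expansion_tendsto:
  assumes "has_expansion a a0 a1 a2"
  shows "(a \<longlongrightarrow> a0) (at_right 0)"
proof -
  obtain C where C: "\<forall>\<^sub>F e in at_right 0. \<bar>a e - (a0 + e * a1 + e\<^sup>2 * a2)\<bar> \<le> C * e ^ 3"
    using assms unfolding has_expansion_def by blast
  show ?thesis
  proof (rule tendsto_by_vanishing_bound)
    show "\<forall>\<^sub>F e in at_right 0. \<bar>a e - a0\<bar> \<le> e * \<bar>a1\<bar> + e\<^sup>2 * \<bar>a2\<bar> + C * e ^ 3"
      using C eventually_at_right_less[of 0]
    proof eventually_elim
      case (elim e)
      have "\<bar>e * a1\<bar> = e * \<bar>a1\<bar>" "\<bar>e\<^sup>2 * a2\<bar> = e\<^sup>2 * \<bar>a2\<bar>"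
        using elim(2) by (simp_all add: abs_mult)
      then show ?case using elim(1) by linarith
    qed
    show "((\<lambda>e. e * \<bar>a1\<bar> + e\<^sup>2 * \<bar>a2\<bar> + C * e ^ 3) \<longlongrightarrow> 0) (at_right 0)"
      by (rule tendsto_eq_intros | simp)+
  qed
qed

lemma has_expansion_tendsto_div:
  assumes "has_expansion a 0 a1 a2"
  shows "((\<lambda>e. a e / e) \<longlongrightarrow> a1) (at_right 0)"
proof -
  obtain C where C: "\<forall>\<^sub>F e in at_right 0. \<bar>a e - (e * a1 + e\<^sup>2 * a2)\<bar> \<le> C * e ^ 3"
    using assms unfolding has_expansion_def by auto
  show ?thesis
  proof (rule tendsto_by_vanishing_bound)
    show "\<forall>\<^sub>F e in at_right 0. \<bar>a e / e - a1\<bar> \<le> e * \<bar>a2\<bar> + C * e\<^sup>2"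
      using C eventually_at_right_less[of 0]
    proof eventually_elim
      case (elim e)
      have eq: "a e / e - a1 = (a e - (e * a1 + e\<^sup>2 * a2)) / e + e * a2"
        using elim(2) by (simp add: field_simps power2_eq_square)
      have "\<bar>a e / e - a1\<bar> \<le> \<bar>(a e - (e * a1 + e\<^sup>2 * a2)) / e\<bar> + \<bar>e * a2\<bar>"
        unfolding eq by (rule abs_triangle_ineq)
      also have "\<dots> \<le> C * e ^ 3 / e + e * \<bar>a2\<bar>"
        using elim by (simp add: abs_divide abs_mult divide_right_mono)
      also have "C * e ^ 3 / e = C * e\<^sup>2"
        using elim(2) by (simp add: power3_eq_cube power2_eq_square)
      finally show ?case by simp
    qed
    show "((\<lambda>e. e * \<bar>a2\<bar> + C * e\<^sup>2) \<longlongrightarrow> 0) (at_right 0)"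
      by (rule tendsto_eq_intros | simp)+
  qed
qed

lemma has_expansion_tendsto_div_sq:
  assumes "has_expansion a 0 0 a2"
  shows "((\<lambda>e. a e / e\<^sup>2) \<longlongrightarrow> a2) (at_right 0)"
proof -
  obtain C where C: "\<forall>\<^sub>F e in at_right 0. \<bar>a e - e\<^sup>2 * a2\<bar> \<le> C * e ^ 3"
    using assms unfolding has_expansion_def by auto
  show ?thesis
  proof (rule tendsto_by_vanishing_bound)
    show "\<forall>\<^sub>F e in at_right 0. \<bar>a e / e\<^sup>2 - a2\<bar> \<le> C * e"
      using C eventually_at_right_less[of 0]
    proof eventually_elim
      case (elim e)
      have "\<bar>a e / e\<^sup>2 - a2\<bar> = \<bar>a e - e\<^sup>2 * a2\<bar> / e\<^sup>2"
        using elim(2) by (simp add: field_simps)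
      also have "\<dots> \<le> C * e ^ 3 / e\<^sup>2"
        using elim by (simp add: divide_right_mono)
      also have "\<dots> = C * e"
        using elim(2) by (simp add: power3_eq_cube power2_eq_square)
      finally show ?case .
    qed
    show "((\<lambda>e. C * e) \<longlongrightarrow> 0) (at_right 0)"
      by (rule tendsto_eq_intros | simp)+
  qed
qed

lemma has_expansion_div_sq_limit:
  assumes exp: "has_expansion a a0 a1 a2" and lim: "((\<lambda>e. a e / e\<^sup>2) \<longlongrightarrow> L) (at_right 0)"
  shows "a0 = 0" and "a1 = 0" and "a2 = L"
proof -
  have ne: "\<forall>\<^sub>F e in at_right (0::real). e \<noteq> 0"
    using eventually_at_right_less[of 0] by eventually_elim simp
  have "\<forall>\<^sub>F e in at_right 0. e\<^sup>2 * (a e / e\<^sup>2) = a e"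
    using ne by eventually_elim simp
  then have "(a \<longlongrightarrow> 0\<^sup>2 * L) (at_right 0)"
    by (rule Lim_transform_eventually[rotated]) (intro tendsto_intros lim)
  then show a0: "a0 = 0"
    using has_expansion_tendsto[OF exp] tendsto_unique[OF trivial_limit_at_right_real] by auto
  have "\<forall>\<^sub>F e in at_right 0. e * (a e / e\<^sup>2) = a e / e"
    using ne by eventually_elim (simp add: power2_eq_square)
  then have "((\<lambda>e. a e / e) \<longlongrightarrow> 0 * L) (at_right 0)"
    by (rule Lim_transform_eventually[rotated]) (intro tendsto_intros lim)
  then show a1: "a1 = 0"
    using has_expansion_tendsto_div[OF exp[unfolded a0]] tendsto_unique[OF trivial_limit_at_right_real]
    by auto
  show "a2 = L"
    using has_expansion_tendsto_div_sq[OF exp[unfolded a0 a1]] lim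
      tendsto_unique[OF trivial_limit_at_right_real] by blast
qed

lemma bdd_C2_differentiable:
  assumes "bdd_C2 f"
  shows "f differentiable (at x)" and "pd i f differentiable (at x)"
  using assms unfolding bdd_C2_def twice_pdiff_def by auto

lemma asym_expE:
  assumes "asym_exp f f0 f1 f2"
  obtains C where "\<forall>\<^sub>F e in at_right 0. twice_pdiff (f e) \<and>
        (\<forall>x. \<bar>f e x - (f0 x + e * f1 x + e\<^sup>2 * f2 x)\<bar> \<le> C * e ^ 3 \<and>
             (\<forall>i. \<bar>pd i (f e) x - (pd i f0 x + e * pd i f1 x + e\<^sup>2 * pd i f2 x)\<bar> \<le> C * e ^ 3) \<and>
             (\<forall>i j. \<bar>pd j (pd i (f e)) x - (pd j (pd i f0) x + e * pd j (pd i f1) x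
                                     + e\<^sup>2 * pd j (pd i f2) x)\<bar> \<le> C * e ^ 3))"
proof -
  obtain \<delta> C where "\<delta> > 0" and C: "\<forall>e. 0 < e \<and> e < \<delta> \<longrightarrow> twice_pdiff (f e) \<and>
        (\<forall>x. \<bar>f e x - (f0 x + e * f1 x + e\<^sup>2 * f2 x)\<bar> \<le> C * e ^ 3 \<and>
             (\<forall>i. \<bar>pd i (f e) x - (pd i f0 x + e * pd i f1 x + e\<^sup>2 * pd i f2 x)\<bar> \<le> C * e ^ 3) \<and>
             (\<forall>i j. \<bar>pd j (pd i (f e)) x - (pd j (pd i f0) x + e * pd j (pd i f1) x
                                     + e\<^sup>2 * pd j (pd i f2) x)\<bar> \<le> C * e ^ 3))"
    using assms unfolding asym_exp_def by blast
  then have "\<forall>\<^sub>F e in at_right 0. 0 < e \<and> e < \<delta>"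
    unfolding eventually_at_right_field by blast
  then show ?thesis
    using C by (intro that[of C]) (auto elim: eventually_mono)
qed

lemma asym_exp_eventually_twice_pdiff:
  "asym_exp f f0 f1 f2 \<Longrightarrow> \<forall>\<^sub>F e in at_right 0. twice_pdiff (f e)"
  by (erule asym_expE, erule eventually_mono) blast

lemma
  assumes "asym_exp f f0 f1 f2"
  shows asym_exp_has_expansion: "has_expansion (\<lambda>e. f e x) (f0 x) (f1 x) (f2 x)"
    and asym_exp_has_expansion_pd:
      "has_expansion (\<lambda>e. pd i (f e) x) (pd i f0 x) (pd i f1 x) (pd i f2 x)"
    and asym_exp_has_expansion_pd_pd:
      "has_expansion (\<lambda>e. pd j (pd i (f e)) x) (pd j (pd i f0) x) (pd j (pd i f1) x) (pd j (pd i f2) x)"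
    and asym_exp_uniform_bound:
      "\<exists>C. \<forall>\<^sub>F e in at_right 0. \<forall>x. \<bar>f e x - (f0 x + e * f1 x + e\<^sup>2 * f2 x)\<bar> \<le> C * e ^ 3"
  unfolding has_expansion_def
  by (rule asym_expE[OF assms], rule exI, erule eventually_mono, blast)+

section \<open>Pointwise convergence with first derivatives\<close>

definition C1_conv_at :: "(real \<Rightarrow> real^'d \<Rightarrow> real) \<Rightarrow> (real^'d \<Rightarrow> real) \<Rightarrow> real^'d \<Rightarrow> bool" where
  "C1_conv_at f f0 x \<longleftrightarrow>
     (\<forall>\<^sub>F e in at_right 0. f e differentiable (at x)) \<and> f0 differentiable (at x) \<and>
     ((\<lambda>e. f e x) \<longlongrightarrow> f0 x) (at_right 0) \<and> (\<forall>i. ((\<lambda>e. pd i (f e) x) \<longlongrightarrow> pd i f0 x) (at_right 0))"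

lemma
  assumes "C1_conv_at f f0 x"
  shows C1_conv_at_eventually_differentiable: "\<forall>\<^sub>F e in at_right 0. f e differentiable (at x)"
    and C1_conv_at_differentiable: "f0 differentiable (at x)"
    and C1_conv_at_tendsto: "((\<lambda>e. f e x) \<longlongrightarrow> f0 x) (at_right 0)"
    and C1_conv_at_tendsto_pd: "((\<lambda>e. pd i (f e) x) \<longlongrightarrow> pd i f0 x) (at_right 0)"
  using assms unfolding C1_conv_at_def by auto

lemma C1_conv_atI:
  assumes "\<forall>\<^sub>F e in at_right 0. f e differentiable (at x) \<and> (\<forall>i. pd i (f e) x = D i e)"
    and "f0 differentiable (at x)" and "\<And>i. pd i f0 x = D0 i"
    and "((\<lambda>e. f e x) \<longlongrightarrow> f0 x) (at_right 0)" and "\<And>i. (D i \<longlongrightarrow> D0 i) (at_right 0)"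
  shows "C1_conv_at f f0 x"
  unfolding C1_conv_at_def
proof (intro conjI allI)
  show "\<forall>\<^sub>F e in at_right 0. f e differentiable (at x)"
    using assms(1) by eventually_elim simp
  fix i
  have "\<forall>\<^sub>F e in at_right 0. D i e = pd i (f e) x"
    using assms(1) by eventually_elim simp
  then show "((\<lambda>e. pd i (f e) x) \<longlongrightarrow> pd i f0 x) (at_right 0)"
    unfolding assms(3) by (rule Lim_transform_eventually[OF assms(5)])
qed (use assms in auto)

lemma C1_conv_at_cong:
  assumes g: "C1_conv_at g g0 x" and eq: "\<forall>\<^sub>F e in at_right 0. f e = g e"
  shows "C1_conv_at f g0 x"
  unfolding C1_conv_at_def
proof (intro conjI allI)
  show "\<forall>\<^sub>F e in at_right 0. f e differentiable (at x)"
    using eq C1_conv_at_eventually_differentiable[OF g] by eventually_elim simp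
  show "((\<lambda>e. f e x) \<longlongrightarrow> g0 x) (at_right 0)"
    using eq by (intro Lim_transform_eventually[OF C1_conv_at_tendsto[OF g]]) (auto elim: eventually_mono)
  show "((\<lambda>e. pd i (f e) x) \<longlongrightarrow> pd i g0 x) (at_right 0)" for i
    using eq by (intro Lim_transform_eventually[OF C1_conv_at_tendsto_pd[OF g]]) (auto elim: eventually_mono)
qed (rule C1_conv_at_differentiable[OF g])

lemma C1_conv_at_const: "(c \<longlongrightarrow> c0) (at_right 0) \<Longrightarrow> C1_conv_at (\<lambda>e y. c e) (\<lambda>y. c0) x"
  unfolding C1_conv_at_def by auto

lemma C1_conv_at_add:
  assumes f: "C1_conv_at f f0 x" and g: "C1_conv_at g g0 x"
  shows "C1_conv_at (\<lambda>e y. f e y + g e y) (\<lambda>y. f0 y + g0 y) x"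
proof (rule C1_conv_atI[where D="\<lambda>i e. pd i (f e) x + pd i (g e) x"])
  show "\<forall>\<^sub>F e in at_right 0. (\<lambda>y. f e y + g e y) differentiable (at x) \<and>
      (\<forall>i. pd i (\<lambda>y. f e y + g e y) x = pd i (f e) x + pd i (g e) x)"
    using C1_conv_at_eventually_differentiable[OF f] C1_conv_at_eventually_differentiable[OF g]
    by eventually_elim (simp add: pd_add)
  note diff = C1_conv_at_differentiable[OF f] C1_conv_at_differentiable[OF g]
  show "(\<lambda>y. f0 y + g0 y) differentiable (at x)"
    using diff by simp
  show "pd i (\<lambda>y. f0 y + g0 y) x = pd i f0 x + pd i g0 x" for i
    using diff by (rule pd_add)
  show "((\<lambda>e. f e x + g e x) \<longlongrightarrow> f0 x + g0 x) (at_right 0)"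
    by (intro tendsto_intros C1_conv_at_tendsto[OF f] C1_conv_at_tendsto[OF g])
  show "((\<lambda>e. pd i (f e) x + pd i (g e) x) \<longlongrightarrow> pd i f0 x + pd i g0 x) (at_right 0)" for i
    by (intro tendsto_intros C1_conv_at_tendsto_pd[OF f] C1_conv_at_tendsto_pd[OF g])
qed

lemma C1_conv_at_mult:
  assumes f: "C1_conv_at f f0 x" and g: "C1_conv_at g g0 x"
  shows "C1_conv_at (\<lambda>e y. f e y * g e y) (\<lambda>y. f0 y * g0 y) x"
proof (rule C1_conv_atI[where D="\<lambda>i e. pd i (f e) x * g e x + f e x * pd i (g e) x"])
  show "\<forall>\<^sub>F e in at_right 0. (\<lambda>y. f e y * g e y) differentiable (at x) \<and>
      (\<forall>i. pd i (\<lambda>y. f e y * g e y) x = pd i (f e) x * g e x + f e x * pd i (g e) x)"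
    using C1_conv_at_eventually_differentiable[OF f] C1_conv_at_eventually_differentiable[OF g]
    by eventually_elim (simp add: pd_mult)
  note diff = C1_conv_at_differentiable[OF f] C1_conv_at_differentiable[OF g]
  show "(\<lambda>y. f0 y * g0 y) differentiable (at x)"
    using diff by simp
  show "pd i (\<lambda>y. f0 y * g0 y) x = pd i f0 x * g0 x + f0 x * pd i g0 x" for i
    using diff by (rule pd_mult)
  show "((\<lambda>e. f e x * g e x) \<longlongrightarrow> f0 x * g0 x) (at_right 0)"
    by (intro tendsto_intros C1_conv_at_tendsto[OF f] C1_conv_at_tendsto[OF g])
  show "((\<lambda>e. pd i (f e) x * g e x + f e x * pd i (g e) x)
      \<longlongrightarrow> pd i f0 x * g0 x + f0 x * pd i g0 x) (at_right 0)" for i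
    by (intro tendsto_intros C1_conv_at_tendsto[OF f] C1_conv_at_tendsto[OF g]
        C1_conv_at_tendsto_pd[OF f] C1_conv_at_tendsto_pd[OF g])
qed

lemma C1_conv_at_inverse:
  assumes f: "C1_conv_at f f0 x" and nz: "f0 x \<noteq> 0"
  shows "C1_conv_at (\<lambda>e y. inverse (f e y)) (\<lambda>y. inverse (f0 y)) x"
proof (rule C1_conv_atI[where D="\<lambda>i e. - (pd i (f e) x * inverse (f e x ^ 2))"])
  have "\<forall>\<^sub>F e in at_right 0. f e x \<noteq> 0"
    using tendsto_imp_eventually_ne[OF C1_conv_at_tendsto[OF f] nz] .
  then show "\<forall>\<^sub>F e in at_right 0. (\<lambda>y. inverse (f e y)) differentiable (at x) \<and>
      (\<forall>i. pd i (\<lambda>y. inverse (f e y)) x = - (pd i (f e) x * inverse (f e x ^ 2)))"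
    using C1_conv_at_eventually_differentiable[OF f] by eventually_elim (simp add: pd_inverse)
  note diff = C1_conv_at_differentiable[OF f]
  show "(\<lambda>y. inverse (f0 y)) differentiable (at x)"
    using diff nz by simp
  show "pd i (\<lambda>y. inverse (f0 y)) x = - (pd i f0 x * inverse (f0 x ^ 2))" for i
    using diff nz by (rule pd_inverse)
  show "((\<lambda>e. inverse (f e x)) \<longlongrightarrow> inverse (f0 x)) (at_right 0)"
    using nz by (intro tendsto_intros C1_conv_at_tendsto[OF f])
  show "((\<lambda>e. - (pd i (f e) x * inverse (f e x ^ 2)))
      \<longlongrightarrow> - (pd i f0 x * inverse (f0 x ^ 2))) (at_right 0)" for i
    using nz by (intro tendsto_intros C1_conv_at_tendsto[OF f] C1_conv_at_tendsto_pd[OF f]) simp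
qed

lemma C1_conv_at_scale:
  "(c \<longlongrightarrow> c0) (at_right 0) \<Longrightarrow> C1_conv_at f f0 x \<Longrightarrow>
    C1_conv_at (\<lambda>e y. c e * f e y) (\<lambda>y. c0 * f0 y) x"
  by (rule C1_conv_at_mult[OF C1_conv_at_const])

lemma C1_conv_at_diff:
  assumes "C1_conv_at f f0 x" and "C1_conv_at g g0 x"
  shows "C1_conv_at (\<lambda>e y. f e y - g e y) (\<lambda>y. f0 y - g0 y) x"
  using C1_conv_at_add[OF assms(1) C1_conv_at_scale[OF tendsto_const assms(2), of "-1"]] by simp

lemma C1_conv_at_sum:
  assumes "finite S" and "\<And>k. k \<in> S \<Longrightarrow> C1_conv_at (f k) (f0 k) x"
  shows "C1_conv_at (\<lambda>e y. \<Sum>k\<in>S. f k e y) (\<lambda>y. \<Sum>k\<in>S. f0 k y) x"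
  using assms
proof (induction S rule: finite_induct)
  case empty
  then show ?case using C1_conv_at_const[of "\<lambda>e. 0" 0 x] by simp
next
  case (insert k S)
  then show ?case using C1_conv_at_add[of "f k" "f0 k" x] by simp
qed

lemma C1_conv_at_norm_sq:
  assumes "\<And>k. C1_conv_at (\<lambda>e y. F e y $ k) (\<lambda>y. F0 y $ k) x"
  shows "C1_conv_at (\<lambda>e y. (norm (F e y))\<^sup>2) (\<lambda>y. (norm (F0 y))\<^sup>2) x"
proof -
  have "C1_conv_at (\<lambda>e y. (F e y $ k)\<^sup>2) (\<lambda>y. (F0 y $ k)\<^sup>2) x" for k
    using C1_conv_at_mult[OF assms assms] by (simp add: power2_eq_square)
  then show ?thesis
    unfolding norm_sq_vec by (intro C1_conv_at_sum) auto
qed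

lemma C1_conv_at_divide_const:
  "C1_conv_at f f0 x \<Longrightarrow> C1_conv_at (\<lambda>e y. f e y / c) (\<lambda>y. f0 y / c) x"
  using C1_conv_at_scale[OF tendsto_const, of f f0 x "inverse c"] by (simp add: divide_inverse mult.commute)

lemma tendsto_divg:
  assumes "\<And>i. C1_conv_at (\<lambda>e y. F e y $ i) (\<lambda>y. F0 y $ i) x"
  shows "((\<lambda>e. divg (F e) x) \<longlongrightarrow> divg F0 x) (at_right 0)"
  unfolding divg_def by (intro tendsto_sum C1_conv_at_tendsto_pd assms)

lemma asym_exp_C1_conv_at:
  assumes "asym_exp f f0 f1 f2"
  shows "C1_conv_at f f0 x"
  unfolding C1_conv_at_def
proof (intro conjI allI)
  show "\<forall>\<^sub>F e in at_right 0. f e differentiable (at x)"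
    using asym_exp_eventually_twice_pdiff[OF assms] by eventually_elim (simp add: twice_pdiff_def)
  show "f0 differentiable (at x)"
    using assms unfolding asym_exp_def by (simp add: bdd_C2_differentiable)
  show "((\<lambda>e. f e x) \<longlongrightarrow> f0 x) (at_right 0)"
    by (rule has_expansion_tendsto[OF asym_exp_has_expansion[OF assms]])
  show "((\<lambda>e. pd i (f e) x) \<longlongrightarrow> pd i f0 x) (at_right 0)" for i
    by (rule has_expansion_tendsto[OF asym_exp_has_expansion_pd[OF assms]])
qed

lemma asym_exp_C1_conv_at_pd_div_sq:
  assumes f: "asym_exp f f0 f1 f2" and "\<And>y. pd i f0 y = 0" and "\<And>y. pd i f1 y = 0"
  shows "C1_conv_at (\<lambda>e y. pd i (f e) y / e\<^sup>2) (pd i f2) x"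
proof (rule C1_conv_atI[where D="\<lambda>j e. pd j (pd i (f e)) x / e\<^sup>2"])
  have vanish: "pd i f0 = (\<lambda>y. 0)" "pd i f1 = (\<lambda>y. 0)"
    using assms(2,3) by auto
  show "\<forall>\<^sub>F e in at_right 0. (\<lambda>y. pd i (f e) y / e\<^sup>2) differentiable (at x) \<and>
      (\<forall>j. pd j (\<lambda>y. pd i (f e) y / e\<^sup>2) x = pd j (pd i (f e)) x / e\<^sup>2)"
    using asym_exp_eventually_twice_pdiff[OF f] eventually_at_right_less[of 0]
    by eventually_elim (simp add: twice_pdiff_def pd_divide_const)
  show "pd i f2 differentiable (at x)"
    using f unfolding asym_exp_def by (simp add: bdd_C2_differentiable)
  show "pd j (pd i f2) x = pd j (pd i f2) x" for j ..
  show "((\<lambda>e. pd i (f e) x / e\<^sup>2) \<longlongrightarrow> pd i f2 x) (at_right 0)"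
    by (rule has_expansion_tendsto_div_sq)
       (use asym_exp_has_expansion_pd[OF f, of i x] vanish in simp)
  show "((\<lambda>e. pd j (pd i (f e)) x / e\<^sup>2) \<longlongrightarrow> pd j (pd i f2) x) (at_right 0)" for j
    by (rule has_expansion_tendsto_div_sq)
       (use asym_exp_has_expansion_pd_pd[OF f, of j i x] vanish in simp)
qed

lemma tendsto_Inf_range:
  fixes f :: "'a \<Rightarrow> 'b \<Rightarrow> real"
  assumes "\<forall>\<^sub>F e in F. \<forall>x. \<bar>f e x - c\<bar> \<le> b e" and "(b \<longlongrightarrow> 0) F"
  shows "((\<lambda>e. Inf (range (f e))) \<longlongrightarrow> c) F"
proof (rule tendsto_by_vanishing_bound[OF _ assms(2)])
  show "\<forall>\<^sub>F e in F. \<bar>Inf (range (f e)) - c\<bar> \<le> b e"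
    using assms(1)
  proof eventually_elim
    case (elim e)
    then have lower: "c - b e \<le> f e x" for x
      by (smt (verit))
    have bdd: "bdd_below (range (f e))"
      using lower by (intro bdd_belowI[of _ "c - b e"]) auto
    have "c - b e \<le> Inf (range (f e))"
      by (rule cInf_greatest) (use lower in auto)
    moreover have "Inf (range (f e)) \<le> f e undefined"
      using bdd by (intro cInf_lower) auto
    moreover have "f e undefined \<le> c + b e"
      using elim by (smt (verit))
    ultimately show ?case
      by (simp add: abs_le_iff)
  qed
qed

lemma asym_exp_tendsto_pinf:
  assumes f: "asym_exp f f0 f1 f2" and const: "\<And>y. f0 y = c"
  shows "((\<lambda>e. pinf (f e)) \<longlongrightarrow> c) (at_right 0)"
proof -
  obtain C where C: "\<forall>\<^sub>F e in at_right 0. \<forall>x. \<bar>f e x - (f0 x + e * f1 x + e\<^sup>2 * f2 x)\<bar> \<le> C * e ^ 3"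
    using asym_exp_uniform_bound[OF f] by blast
  obtain B1 B2 where B1: "\<And>x. \<bar>f1 x\<bar> \<le> B1" and B2: "\<And>x. \<bar>f2 x\<bar> \<le> B2"
    using f unfolding asym_exp_def bdd_C2_def bounded_iff by auto
  show ?thesis
    unfolding pinf_def
  proof (rule tendsto_Inf_range)
    show "\<forall>\<^sub>F e in at_right 0. \<forall>x. \<bar>f e x - c\<bar> \<le> e * B1 + e\<^sup>2 * B2 + C * e ^ 3"
      using C eventually_at_right_less[of 0]
    proof eventually_elim
      case (elim e)
      show ?case
      proof
        fix x
        have "\<bar>e * f1 x\<bar> \<le> e * B1" "\<bar>e\<^sup>2 * f2 x\<bar> \<le> e\<^sup>2 * B2"
          using elim(2) B1[of x] B2[of x] by (simp_all add: abs_mult mult_left_mono)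
        then show "\<bar>f e x - c\<bar> \<le> e * B1 + e\<^sup>2 * B2 + C * e ^ 3"
          using elim(1) const[of x] by (smt (verit))
      qed
    qed
    show "((\<lambda>e. e * B1 + e\<^sup>2 * B2 + C * e ^ 3) \<longlongrightarrow> 0) (at_right 0)"
      by (rule tendsto_eq_intros | simp)+
  qed
qed

section \<open>One step of the scheme in the low Mach limit\<close>

locale low_mach_step =
  fixes \<gamma> dt P0 :: real
    and r p r' p' :: "real \<Rightarrow> real^'d \<Rightarrow> real"
    and u u' :: "real \<Rightarrow> real^'d \<Rightarrow> real^'d"
    and r0 r1 r2 p0 p1 p2 r0' r1' r2' p0' p1' p2' :: "real^'d \<Rightarrow> real"
    and u0 u1 u2 u0' u1' u2' :: "real^'d \<Rightarrow> real^'d"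
  assumes gamma: "\<gamma> > 1" and dt: "dt > 0"
    and scheme: "\<And>e. 0 < e \<Longrightarrow> e \<le> 1 \<Longrightarrow> scheme_step dt e \<gamma> (r e) (u e) (p e) (r' e) (u' e) (p' e)"
    and exp_r: "asym_exp r r0 r1 r2" and exp_u: "vasym_exp u u0 u1 u2"
    and exp_p: "asym_exp p p0 p1 p2" and exp_r': "asym_exp r' r0' r1' r2'"
    and exp_u': "vasym_exp u' u0' u1' u2'" and exp_p': "asym_exp p' p0' p1' p2'"
    and p0_const: "\<And>x. p0 x = P0" and P0_pos: "P0 > 0" and r0'_pos: "\<And>x. r0' x > 0"
begin

lemma eventually_scheme_step:
  "\<forall>\<^sub>F e in at_right 0. 0 < e \<and> e\<^sup>2 < 1 \<and> scheme_step dt e \<gamma> (r e) (u e) (p e) (r' e) (u' e) (p' e)"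
proof -
  have "\<forall>\<^sub>F e in at_right (0::real). 0 < e \<and> e < 1"
    unfolding eventually_at_right_field by (intro exI[of _ 1]) auto
  then show ?thesis
    by eventually_elim (use scheme in \<open>auto simp: abs_square_less_1\<close>)
qed

lemma eventually_rho_hat_eq: "\<forall>\<^sub>F e in at_right 0. rho_hat dt (r e) (u e) = r' e"
  using eventually_scheme_step by eventually_elim (simp add: scheme_step_def fun_eq_iff)

lemma eventually_m_hat_eq:
  "\<forall>\<^sub>F e in at_right 0. \<forall>y i. m_hat dt (r e) (u e) (p e) y $ i
     = r' e y * u' e y $ i + (1 - e\<^sup>2) * dt * (pd i (p' e) y / e\<^sup>2)"
  using eventually_scheme_step
proof eventually_elim
  case (elim e)
  show ?case
  proof (intro allI)
    fix y i
    have "r' e y *\<^sub>R u' e y = m_hat dt (r e) (u e) (p e) y - ((1 - e\<^sup>2) / e\<^sup>2 * dt) *\<^sub>R grad (p' e) y"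
      using elim unfolding scheme_step_def by blast
    then have "(r' e y *\<^sub>R u' e y) $ i
        = (m_hat dt (r e) (u e) (p e) y - ((1 - e\<^sup>2) / e\<^sup>2 * dt) *\<^sub>R grad (p' e) y) $ i"
      by simp
    then show "m_hat dt (r e) (u e) (p e) y $ i = r' e y * u' e y $ i + (1 - e\<^sup>2) * dt * (pd i (p' e) y / e\<^sup>2)"
      by (simp add: grad_def)
  qed
qed

lemma C1_conv_r: "C1_conv_at r r0 x"
  and C1_conv_p: "C1_conv_at p p0 x"
  and C1_conv_r': "C1_conv_at r' r0' x"
  and C1_conv_p': "C1_conv_at p' p0' x"
  and C1_conv_u: "C1_conv_at (\<lambda>e y. u e y $ i) (\<lambda>y. u0 y $ i) x"
  and C1_conv_u': "C1_conv_at (\<lambda>e y. u' e y $ i) (\<lambda>y. u0' y $ i) x"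
  using exp_r exp_p exp_r' exp_p' exp_u exp_u'
  by (auto simp: vasym_exp_def intro: asym_exp_C1_conv_at)

lemma pd_p0 [simp]: "pd i p0 x = 0"
proof -
  have "p0 = (\<lambda>y. P0)"
    using p0_const by auto
  then show ?thesis by simp
qed

lemma tendsto_m_hat:
  "((\<lambda>e. m_hat dt (r e) (u e) (p e) x $ j) \<longlongrightarrow> r0 x * u0 x $ j - dt * div_ruu r0 u0 x $ j) (at_right 0)"
proof -
  have flux: "C1_conv_at (\<lambda>e y. r e y * u e y $ i * u e y $ j) (\<lambda>y. r0 y * u0 y $ i * u0 y $ j) x" for i
    by (intro C1_conv_at_mult C1_conv_r C1_conv_u)
  have "((\<lambda>e. r e x * u e x $ j - dt * ((\<Sum>i\<in>UNIV. pd i (\<lambda>y. r e y * u e y $ i * u e y $ j) x) + pd j (p e) x))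
      \<longlongrightarrow> r0 x * u0 x $ j - dt * ((\<Sum>i\<in>UNIV. pd i (\<lambda>y. r0 y * u0 y $ i * u0 y $ j) x) + pd j p0 x))
      (at_right 0)"
    by (intro tendsto_intros C1_conv_at_tendsto C1_conv_at_tendsto_pd flux C1_conv_r C1_conv_u C1_conv_p)
  then show ?thesis
    by (simp add: m_hat_def div_ruu_def grad_def)
qed

lemma
  shows pd_p0'_eq_0: "pd j p0' x = 0"
    and pd_p1'_eq_0: "pd j p1' x = 0"
    and momentum_limit_component:
      "r0 x * u0 x $ j - dt * div_ruu r0 u0 x $ j - r0' x * u0' x $ j = dt * pd j p2' x"
proof -
  define M0 where "M0 = r0 x * u0 x $ j - dt * div_ruu r0 u0 x $ j - r0' x * u0' x $ j"
  have "((\<lambda>e. (m_hat dt (r e) (u e) (p e) x $ j - r' e x * u' e x $ j) / ((1 - e\<^sup>2) * dt))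
      \<longlongrightarrow> M0 / ((1 - 0\<^sup>2) * dt)) (at_right 0)"
    unfolding M0_def using dt
    by (intro tendsto_intros tendsto_m_hat C1_conv_at_tendsto C1_conv_r' C1_conv_u') auto
  moreover have "\<forall>\<^sub>F e in at_right 0.
      (m_hat dt (r e) (u e) (p e) x $ j - r' e x * u' e x $ j) / ((1 - e\<^sup>2) * dt) = pd j (p' e) x / e\<^sup>2"
    using eventually_m_hat_eq eventually_scheme_step by eventually_elim (use dt in simp)
  ultimately have "((\<lambda>e. pd j (p' e) x / e\<^sup>2) \<longlongrightarrow> M0 / dt) (at_right 0)"
    using Lim_transform_eventually by fastforce
  note coefficients = has_expansion_div_sq_limit[OF asym_exp_has_expansion_pd[OF exp_p'] this]
  show "pd j p0' x = 0" and "pd j p1' x = 0"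
    using coefficients(1,2) .
  show "M0 = dt * pd j p2' x" unfolding M0_def[symmetric]
    using coefficients(3) dt by simp
qed

lemma p0'_constant: "p0' x = p0' y"
  by (rule pd_eq_0_imp_constant) (use exp_p' in \<open>auto simp: asym_exp_def bdd_C2_differentiable pd_p0'_eq_0\<close>)

lemma density_limit: "r0' x = r0 x - dt * divg (\<lambda>y. r0 y *\<^sub>R u0 y) x"
proof -
  have "C1_conv_at (\<lambda>e y. (r e y *\<^sub>R u e y) $ i) (\<lambda>y. (r0 y *\<^sub>R u0 y) $ i) x" for i
    using C1_conv_at_mult[OF C1_conv_r C1_conv_u] by simp
  then have "((\<lambda>e. rho_hat dt (r e) (u e) x) \<longlongrightarrow> r0 x - dt * divg (\<lambda>y. r0 y *\<^sub>R u0 y) x) (at_right 0)"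
    unfolding rho_hat_def by (intro tendsto_intros tendsto_divg C1_conv_at_tendsto[OF C1_conv_r])
  moreover have "\<forall>\<^sub>F e in at_right 0. rho_hat dt (r e) (u e) x = r' e x"
    using eventually_rho_hat_eq by eventually_elim simp
  ultimately have "((\<lambda>e. r' e x) \<longlongrightarrow> r0 x - dt * divg (\<lambda>y. r0 y *\<^sub>R u0 y) x) (at_right 0)"
    by (rule Lim_transform_eventually)
  then show ?thesis
    using C1_conv_at_tendsto[OF C1_conv_r'] tendsto_unique[OF trivial_limit_at_right_real] by blast
qed

lemma momentum_limit: "r0' x *\<^sub>R u0' x = r0 x *\<^sub>R u0 x - dt *\<^sub>R div_ruu r0 u0 x - dt *\<^sub>R grad p2' x"
  using momentum_limit_component by (simp add: vec_eq_iff grad_def algebra_simps)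

lemma tendsto_pinf_p: "((\<lambda>e. pinf (p e)) \<longlongrightarrow> P0) (at_right 0)"
  by (rule asym_exp_tendsto_pinf[OF exp_p p0_const])

lemma tendsto_pinf_p': "((\<lambda>e. pinf (p' e)) \<longlongrightarrow> p0' x) (at_right 0)"
  by (rule asym_exp_tendsto_pinf[OF exp_p']) (rule p0'_constant)

lemma C1_conv_scaled_grad_p': "C1_conv_at (\<lambda>e y. pd i (p' e) y / e\<^sup>2) (pd i p2') x"
  by (rule asym_exp_C1_conv_at_pd_div_sq[OF exp_p']) (simp_all add: pd_p0'_eq_0 pd_p1'_eq_0)

lemma C1_conv_u_hat:
  "C1_conv_at (\<lambda>e y. u_hat dt (r e) (u e) (p e) y $ i) (\<lambda>y. (u0' y + (dt / r0' y) *\<^sub>R grad p2' y) $ i) x"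
proof -
  have nz: "r0' y \<noteq> 0" for y
    using r0'_pos[of y] by simp
  have "(\<lambda>y. (u0' y + (dt / r0' y) *\<^sub>R grad p2' y) $ i)
      = (\<lambda>y. inverse (r0' y) * (r0' y * u0' y $ i + (1 - 0\<^sup>2) * dt * pd i p2' y))"
    by (simp add: fun_eq_iff grad_def field_simps nz)
  moreover have "C1_conv_at
      (\<lambda>e y. inverse (r' e y) * (r' e y * u' e y $ i + (1 - e\<^sup>2) * dt * (pd i (p' e) y / e\<^sup>2)))
      (\<lambda>y. inverse (r0' y) * (r0' y * u0' y $ i + (1 - 0\<^sup>2) * dt * pd i p2' y)) x"
    using nz[of x]
    by (intro C1_conv_at_mult C1_conv_at_inverse C1_conv_at_add C1_conv_at_const tendsto_intros
        C1_conv_r' C1_conv_u' C1_conv_scaled_grad_p')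
  moreover have "\<forall>\<^sub>F e in at_right 0. (\<lambda>y. u_hat dt (r e) (u e) (p e) y $ i)
      = (\<lambda>y. inverse (r' e y) * (r' e y * u' e y $ i + (1 - e\<^sup>2) * dt * (pd i (p' e) y / e\<^sup>2)))"
    using eventually_m_hat_eq eventually_rho_hat_eq
    by eventually_elim (simp add: u_hat_def fun_eq_iff inverse_eq_divide)
  ultimately show ?thesis
    by (simp add: C1_conv_at_cong)
qed

lemma tendsto_u_hat:
  "((\<lambda>e. u_hat dt (r e) (u e) (p e) x) \<longlongrightarrow> u0' x + (dt / r0' x) *\<^sub>R grad p2' x) (at_right 0)"
  by (rule vec_tendstoI) (rule C1_conv_at_tendsto[OF C1_conv_u_hat])

lemma C1_conv_elliptic_flux:
  "C1_conv_at (\<lambda>e y. (p' e y - pinf (p' e)) * inverse (r' e y) * (pd i (p' e) y / e\<^sup>2)) (\<lambda>y. 0) x"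
proof -
  have "C1_conv_at (\<lambda>e y. (p' e y - pinf (p' e)) * inverse (r' e y) * (pd i (p' e) y / e\<^sup>2))
      (\<lambda>y. (p0' y - p0' x) * inverse (r0' y) * pd i p2' y) x"
    using r0'_pos[of x]
    by (intro C1_conv_at_mult C1_conv_at_diff C1_conv_at_inverse C1_conv_at_const tendsto_pinf_p'
        C1_conv_p' C1_conv_r' C1_conv_scaled_grad_p') auto
  moreover have "(\<lambda>y. (p0' y - p0' x) * inverse (r0' y) * pd i p2' y) = (\<lambda>y. 0)"
    by (rule ext) (metis p0'_constant diff_self mult_zero_left)
  ultimately show ?thesis
    by simp
qed

lemma eventually_elliptic_divg_eq:
  "\<forall>\<^sub>F e in at_right 0.
     divg (\<lambda>y. ((p' e y - pinf (p' e)) / rho_hat dt (r e) (u e) y) *\<^sub>R grad (p' e) y) x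
       = e\<^sup>2 * (\<Sum>i\<in>UNIV. pd i (\<lambda>y. (p' e y - pinf (p' e)) * inverse (r' e y) * (pd i (p' e) y / e\<^sup>2)) x)"
proof -
  have "\<forall>\<^sub>F e in at_right 0. \<forall>i.
      (\<lambda>y. (p' e y - pinf (p' e)) * inverse (r' e y) * (pd i (p' e) y / e\<^sup>2)) differentiable (at x)"
    by (rule eventually_all_finite) (rule C1_conv_at_eventually_differentiable[OF C1_conv_elliptic_flux])
  with eventually_scheme_step eventually_rho_hat_eq show ?thesis
  proof eventually_elim
    case (elim e)
    have rearrange: "a / b * c = e\<^sup>2 * (a * inverse b * (c / e\<^sup>2))" for a b c :: real
      using elim(1) by (cases "b = 0") (simp_all add: field_simps)
    show ?case
      unfolding divg_def sum_distrib_left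
    proof (rule sum.cong[OF refl])
      fix i
      have flux_eq: "(\<lambda>y. (((p' e y - pinf (p' e)) / rho_hat dt (r e) (u e) y) *\<^sub>R grad (p' e) y) $ i)
          = (\<lambda>y. e\<^sup>2 * ((p' e y - pinf (p' e)) * inverse (r' e y) * (pd i (p' e) y / e\<^sup>2)))"
      proof (rule ext)
        fix y
        have "(((p' e y - pinf (p' e)) / rho_hat dt (r e) (u e) y) *\<^sub>R grad (p' e) y) $ i
            = (p' e y - pinf (p' e)) / r' e y * pd i (p' e) y"
          using elim(2) by (simp add: grad_def)
        then show "(((p' e y - pinf (p' e)) / rho_hat dt (r e) (u e) y) *\<^sub>R grad (p' e) y) $ i
            = e\<^sup>2 * ((p' e y - pinf (p' e)) * inverse (r' e y) * (pd i (p' e) y / e\<^sup>2))"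
          unfolding rearrange .
      qed
      show "pd i (\<lambda>y. (((p' e y - pinf (p' e)) / rho_hat dt (r e) (u e) y) *\<^sub>R grad (p' e) y) $ i) x
          = e\<^sup>2 * pd i (\<lambda>y. (p' e y - pinf (p' e)) * inverse (r' e y) * (pd i (p' e) y / e\<^sup>2)) x"
        unfolding flux_eq by (rule pd_cmult[OF elim(3)[rule_format]])
    qed
  qed
qed

lemma elliptic_term_tendsto_0:
  "((\<lambda>e. - ((1 - e\<^sup>2)\<^sup>2 / e\<^sup>2) * dt\<^sup>2 *
      divg (\<lambda>y. ((p' e y - pinf (p' e)) / rho_hat dt (r e) (u e) y) *\<^sub>R grad (p' e) y) x) \<longlongrightarrow> 0)
    (at_right 0)"
proof -
  define g where
    "g i e = pd i (\<lambda>y. (p' e y - pinf (p' e)) * inverse (r' e y) * (pd i (p' e) y / e\<^sup>2)) x" for i e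
  have "(g i \<longlongrightarrow> 0) (at_right 0)" for i
    unfolding g_def using C1_conv_at_tendsto_pd[OF C1_conv_elliptic_flux] by simp
  then have "((\<lambda>e. \<Sum>i\<in>UNIV. g i e) \<longlongrightarrow> 0) (at_right 0)"
    using tendsto_sum[of UNIV g "\<lambda>i. 0"] by simp
  then have "((\<lambda>e. - ((1 - e\<^sup>2)\<^sup>2) * dt\<^sup>2 * (\<Sum>i\<in>UNIV. g i e)) \<longlongrightarrow> - ((1 - 0\<^sup>2)\<^sup>2) * dt\<^sup>2 * 0)
      (at_right 0)"
    by (intro tendsto_intros)
  moreover have "\<forall>\<^sub>F e in at_right 0. - ((1 - e\<^sup>2)\<^sup>2) * dt\<^sup>2 * (\<Sum>i\<in>UNIV. g i e)
      = - ((1 - e\<^sup>2)\<^sup>2 / e\<^sup>2) * dt\<^sup>2 *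
        divg (\<lambda>y. ((p' e y - pinf (p' e)) / rho_hat dt (r e) (u e) y) *\<^sub>R grad (p' e) y) x"
    using eventually_elliptic_divg_eq[where x=x] eventually_scheme_step
  proof eventually_elim
    case (elim e)
    then have "e \<noteq> 0"
      by simp
    then show ?case
      unfolding elim(1) g_def by (simp add: field_simps)
  qed
  ultimately show ?thesis
    using Lim_transform_eventually by fastforce
qed

lemma gradient_term_tendsto_0:
  "((\<lambda>e. - ((1 - e\<^sup>2)\<^sup>2 / (2 * e\<^sup>2)) * dt\<^sup>2 / rho_hat dt (r e) (u e) x * (norm (grad (p' e) x))\<^sup>2)
    \<longlongrightarrow> 0) (at_right 0)"
proof -
  have "((\<lambda>e. - ((1 - e\<^sup>2)\<^sup>2 / 2) * dt\<^sup>2 / r' e x * e\<^sup>2 * (\<Sum>i\<in>UNIV. (pd i (p' e) x / e\<^sup>2)\<^sup>2))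
      \<longlongrightarrow> - ((1 - 0\<^sup>2)\<^sup>2 / 2) * dt\<^sup>2 / r0' x * 0\<^sup>2 * (\<Sum>i\<in>UNIV. (pd i p2' x)\<^sup>2)) (at_right 0)"
    using r0'_pos[of x]
    by (intro tendsto_intros C1_conv_at_tendsto[OF C1_conv_r'] C1_conv_at_tendsto[OF C1_conv_scaled_grad_p'])
      auto
  moreover have "\<forall>\<^sub>F e in at_right 0.
      - ((1 - e\<^sup>2)\<^sup>2 / 2) * dt\<^sup>2 / r' e x * e\<^sup>2 * (\<Sum>i\<in>UNIV. (pd i (p' e) x / e\<^sup>2)\<^sup>2)
      = - ((1 - e\<^sup>2)\<^sup>2 / (2 * e\<^sup>2)) * dt\<^sup>2 / rho_hat dt (r e) (u e) x * (norm (grad (p' e) x))\<^sup>2"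
    using eventually_scheme_step eventually_rho_hat_eq
  proof eventually_elim
    case (elim e)
    have grad_sq: "(norm (grad (p' e) x))\<^sup>2 = e\<^sup>2 * e\<^sup>2 * (\<Sum>i\<in>UNIV. (pd i (p' e) x / e\<^sup>2)\<^sup>2)"
      using elim(1) by (simp add: norm_sq_vec grad_def sum_distrib_left power_divide)
    have "- (a / 2) * d / b * e\<^sup>2 * s = - (a / (2 * e\<^sup>2)) * d / b * (e\<^sup>2 * e\<^sup>2 * s)" for a b d s :: real
      using elim(1) by (cases "b = 0") (simp_all add: field_simps)
    then show ?case
      unfolding grad_sq elim(2) .
  qed
  ultimately show ?thesis
    using Lim_transform_eventually by fastforce
qed

lemma compression_term_tendsto_0:
  "((\<lambda>e. (1 - e\<^sup>2) * dt * (p' e x - pinf (p' e)) * divg (u_hat dt (r e) (u e) (p e)) x) \<longlongrightarrow> 0)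
    (at_right 0)"
proof -
  have "((\<lambda>e. (1 - e\<^sup>2) * dt * (p' e x - pinf (p' e)) * divg (u_hat dt (r e) (u e) (p e)) x)
      \<longlongrightarrow> (1 - 0\<^sup>2) * dt * (p0' x - p0' x) * divg (\<lambda>y. u0' y + (dt / r0' y) *\<^sub>R grad p2' y) x)
      (at_right 0)"
    by (intro tendsto_intros C1_conv_at_tendsto[OF C1_conv_p'] tendsto_pinf_p' tendsto_divg C1_conv_u_hat)
  then show ?thesis
    by simp
qed

lemma C1_conv_rhoE: "C1_conv_at (\<lambda>e. rhoE e \<gamma> (r e) (u e) (p e)) (\<lambda>y. P0 / (\<gamma> - 1)) x"
proof -
  have "C1_conv_at (\<lambda>e. rhoE e \<gamma> (r e) (u e) (p e))
      (\<lambda>y. p0 y / (\<gamma> - 1) + 0\<^sup>2 / 2 * r0 y * (norm (u0 y))\<^sup>2) x"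
    unfolding rhoE_def
    by (intro C1_conv_at_add C1_conv_at_divide_const C1_conv_at_mult C1_conv_at_const tendsto_intros
        C1_conv_at_norm_sq C1_conv_p C1_conv_r C1_conv_u)
  then show ?thesis
    using p0_const by simp
qed

lemma tendsto_E_hat:
  "((\<lambda>e. E_hat dt e \<gamma> (r e) (u e) (p e) x)
    \<longlongrightarrow> P0 / (\<gamma> - 1) - dt * ((P0 / (\<gamma> - 1) + P0) * divg u0 x)) (at_right 0)"
proof -
  have flux: "C1_conv_at
      (\<lambda>e y. ((rhoE e \<gamma> (r e) (u e) (p e) y + (e\<^sup>2 * p e y + (1 - e\<^sup>2) * pinf (p e))) *\<^sub>R u e y) $ i)
      (\<lambda>y. ((P0 / (\<gamma> - 1) + P0) *\<^sub>R u0 y) $ i) x" for i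
  proof -
    have "C1_conv_at
        (\<lambda>e y. (rhoE e \<gamma> (r e) (u e) (p e) y + (e\<^sup>2 * p e y + (1 - e\<^sup>2) * pinf (p e))) * u e y $ i)
        (\<lambda>y. (P0 / (\<gamma> - 1) + (0\<^sup>2 * p0 y + (1 - 0\<^sup>2) * P0)) * u0 y $ i) x"
      by (intro C1_conv_at_mult C1_conv_at_add C1_conv_rhoE C1_conv_at_const tendsto_intros
          tendsto_pinf_p C1_conv_p C1_conv_u)
    then show ?thesis
      by simp
  qed
  have "divg (\<lambda>y. (P0 / (\<gamma> - 1) + P0) *\<^sub>R u0 y) x = (P0 / (\<gamma> - 1) + P0) * divg u0 x"
    by (rule divg_scaleR) (rule C1_conv_at_differentiable[OF C1_conv_u])
  moreover have "((\<lambda>e. rhoE e \<gamma> (r e) (u e) (p e) x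
      - dt * divg (\<lambda>y. (rhoE e \<gamma> (r e) (u e) (p e) y + (e\<^sup>2 * p e y + (1 - e\<^sup>2) * pinf (p e))) *\<^sub>R u e y) x)
      \<longlongrightarrow> P0 / (\<gamma> - 1) - dt * divg (\<lambda>y. (P0 / (\<gamma> - 1) + P0) *\<^sub>R u0 y) x) (at_right 0)"
    by (intro tendsto_intros C1_conv_at_tendsto[OF C1_conv_rhoE] tendsto_divg flux)
  ultimately show ?thesis
    unfolding E_hat_def by simp
qed

lemma tendsto_p_hat:
  "((\<lambda>e. p_hat dt e \<gamma> (r e) (u e) (p e) x) \<longlongrightarrow> P0 - dt * (\<gamma> * P0) * divg u0 x) (at_right 0)"
proof -
  have "((\<lambda>e. (\<gamma> - 1) * (E_hat dt e \<gamma> (r e) (u e) (p e) x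
        - e\<^sup>2 / 2 * r' e x * (norm (u_hat dt (r e) (u e) (p e) x))\<^sup>2))
      \<longlongrightarrow> (\<gamma> - 1) * (P0 / (\<gamma> - 1) - dt * ((P0 / (\<gamma> - 1) + P0) * divg u0 x)
        - 0\<^sup>2 / 2 * r0' x * (norm (u0' x + (dt / r0' x) *\<^sub>R grad p2' x))\<^sup>2)) (at_right 0)"
    by (intro tendsto_intros tendsto_E_hat tendsto_u_hat C1_conv_at_tendsto[OF C1_conv_r']) simp
  moreover have "\<forall>\<^sub>F e in at_right 0. (\<gamma> - 1) * (E_hat dt e \<gamma> (r e) (u e) (p e) x
        - e\<^sup>2 / 2 * r' e x * (norm (u_hat dt (r e) (u e) (p e) x))\<^sup>2) = p_hat dt e \<gamma> (r e) (u e) (p e) x"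
    using eventually_rho_hat_eq by eventually_elim (simp add: p_hat_def)
  ultimately have "((\<lambda>e. p_hat dt e \<gamma> (r e) (u e) (p e) x)
      \<longlongrightarrow> (\<gamma> - 1) * (P0 / (\<gamma> - 1) - dt * ((P0 / (\<gamma> - 1) + P0) * divg u0 x))) (at_right 0)"
    using Lim_transform_eventually by fastforce
  moreover have "(\<gamma> - 1) * (P0 / (\<gamma> - 1) - dt * ((P0 / (\<gamma> - 1) + P0) * divg u0 x))
      = P0 - dt * (\<gamma> * P0) * divg u0 x"
  proof -
    have "\<gamma> - 1 \<noteq> 0"
      using gamma by simp
    then have "(\<gamma> - 1) * (P0 / (\<gamma> - 1)) = P0" and "(\<gamma> - 1) * (P0 / (\<gamma> - 1) + P0) = \<gamma> * P0"
      by (simp_all add: field_simps)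
    then show ?thesis
      by (metis (no_types, opaque_lifting) mult.left_commute right_diff_distrib mult.assoc)
  qed
  ultimately show ?thesis
    by simp
qed

lemma divergence_constraint: "divg u0 x = - (1 / (\<gamma> * P0)) * ((p0' x - P0) / dt)"
proof -
  have lhs: "((\<lambda>e. - ((1 - e\<^sup>2)\<^sup>2 / e\<^sup>2) * dt\<^sup>2 *
        divg (\<lambda>y. ((p' e y - pinf (p' e)) / rho_hat dt (r e) (u e) y) *\<^sub>R grad (p' e) y) x
      + p' e x / (\<gamma> - 1)) \<longlongrightarrow> 0 + p0' x / (\<gamma> - 1)) (at_right 0)"
    using gamma
    by (intro tendsto_add tendsto_divide tendsto_const elliptic_term_tendsto_0
        C1_conv_at_tendsto[OF C1_conv_p']) simp
  have rhs: "((\<lambda>e. - ((1 - e\<^sup>2)\<^sup>2 / (2 * e\<^sup>2)) * dt\<^sup>2 / rho_hat dt (r e) (u e) x * (norm (grad (p' e) x))\<^sup>2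
      - (1 - e\<^sup>2) * dt * (p' e x - pinf (p' e)) * divg (u_hat dt (r e) (u e) (p e)) x
      + p_hat dt e \<gamma> (r e) (u e) (p e) x / (\<gamma> - 1))
      \<longlongrightarrow> 0 - 0 + (P0 - dt * (\<gamma> * P0) * divg u0 x) / (\<gamma> - 1)) (at_right 0)"
    using gamma
    by (intro tendsto_add tendsto_diff tendsto_divide tendsto_const gradient_term_tendsto_0
        compression_term_tendsto_0 tendsto_p_hat) simp
  have "\<forall>\<^sub>F e in at_right 0.
      - ((1 - e\<^sup>2)\<^sup>2 / e\<^sup>2) * dt\<^sup>2 *
        divg (\<lambda>y. ((p' e y - pinf (p' e)) / rho_hat dt (r e) (u e) y) *\<^sub>R grad (p' e) y) x
      + p' e x / (\<gamma> - 1)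
    = - ((1 - e\<^sup>2)\<^sup>2 / (2 * e\<^sup>2)) * dt\<^sup>2 / rho_hat dt (r e) (u e) x * (norm (grad (p' e) x))\<^sup>2
      - (1 - e\<^sup>2) * dt * (p' e x - pinf (p' e)) * divg (u_hat dt (r e) (u e) (p e)) x
      + p_hat dt e \<gamma> (r e) (u e) (p e) x / (\<gamma> - 1)"
    using eventually_scheme_step
  proof eventually_elim
    case (elim e)
    then show ?case
      unfolding scheme_step_def by blast
  qed
  then have "p0' x / (\<gamma> - 1) = (P0 - dt * (\<gamma> * P0) * divg u0 x) / (\<gamma> - 1)"
    using tendsto_unique[OF trivial_limit_at_right_real Lim_transform_eventually[OF lhs] rhs] by simp
  then have "p0' x = P0 - dt * (\<gamma> * P0) * divg u0 x"
    using gamma by simp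
  then show ?thesis
    using gamma P0_pos dt by (simp add: field_simps)
qed

end

theorem theorem3p5:
  fixes \<gamma> dt P0 :: real
    and r p r' p' :: "real \<Rightarrow> real^'d \<Rightarrow> real"
    and u u' :: "real \<Rightarrow> real^'d \<Rightarrow> real^'d"
    and r0 r1 r2 p0 p1 p2 r0' r1' r2' p0' p1' p2' :: "real^'d \<Rightarrow> real"
    and u0 u1 u2 u0' u1' u2' :: "real^'d \<Rightarrow> real^'d"
  assumes gamma: "\<gamma> > 1"
    and dt: "dt > 0"
    and scheme: "\<And>e. 0 < e \<Longrightarrow> e \<le> 1 \<Longrightarrow> scheme_step dt e \<gamma> (r e) (u e) (p e) (r' e) (u' e) (p' e)"
    and exp_r: "asym_exp r r0 r1 r2" and exp_u: "vasym_exp u u0 u1 u2" and exp_p: "asym_exp p p0 p1 p2"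
    and exp_r': "asym_exp r' r0' r1' r2'" and exp_u': "vasym_exp u' u0' u1' u2'"
    and exp_p': "asym_exp p' p0' p1' p2'"
    and p0_const: "\<And>x. p0 x = P0" and P0_pos: "P0 > 0"
    and r0'_pos: "\<And>x. r0' x > 0"
  shows "(\<forall>x y. p0' x = p0' y) \<and>
         (\<forall>x. r0' x = r0 x - dt * divg (\<lambda>y. r0 y *\<^sub>R u0 y) x) \<and>
         (\<forall>x. r0' x *\<^sub>R u0' x = r0 x *\<^sub>R u0 x - dt *\<^sub>R div_ruu r0 u0 x - dt *\<^sub>R grad p2' x) \<and>
         (\<forall>x. divg u0 x = - (1 / (\<gamma> * P0)) * ((p0' x - P0) / dt))"
proof -
  interpret low_mach_step \<gamma> dt P0 r p r' p' u u' r0 r1 r2 p0 p1 p2 r0' r1' r2' p0' p1' p2'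
      u0 u1 u2 u0' u1' u2'
    using assms by unfold_locales auto
  show ?thesis
    using p0'_constant density_limit momentum_limit divergence_constraint by blast
qed

end
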